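(* Let $G=\mathbb Z\ast\mathbb Z^2=\langle t\rangle\ast\langle a,b\mid [a,b]\rangle$ and let $\varphi$ be the automorphism of $G$ with $\varphi(t)=ta$, $\varphi(a)=a$, $\varphi(b)=b$. Then $\operatorname{Fix}(\varphi)=\langle a,b\rangle\ast t\langle a,b\rangle t^{-1}\cong\mathbb Z^2\ast\mathbb Z^2$, so $\operatorname{rk}(\operatorname{Fix}(\varphi))=4=2(\operatorname{rk}(G)-1)$; thus the bound $n(\operatorname{rk}(G)-n+1)$ for endomorphisms of a free product of $n$ free abelian groups is attained.
   Context: $\operatorname{rk}$ is the minimal number of generators; $\operatorname{Fix}(\varphi)=\{g\mid\varphi(g)=g\}$. *)

theory Defs
  imports "HOL-Algebra.Algebra"
begin

fun fp_reduced :: "('a, 'c) monoid_scheme \<Rightarrow> ('b, 'd) monoid_scheme \<Rightarrow> ('a + 'b) list \<Rightarrow> bool" where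
  "fp_reduced G H [] = True"
| "fp_reduced G H [Inl x] = (x \<in> carrier G \<and> x \<noteq> \<one>\<^bsub>G\<^esub>)"
| "fp_reduced G H [Inr y] = (y \<in> carrier H \<and> y \<noteq> \<one>\<^bsub>H\<^esub>)"
| "fp_reduced G H (Inl x # Inl x' # w) = False"
| "fp_reduced G H (Inr y # Inr y' # w) = False"
| "fp_reduced G H (Inl x # Inr y # w) =
     (x \<in> carrier G \<and> x \<noteq> \<one>\<^bsub>G\<^esub> \<and> fp_reduced G H (Inr y # w))"
| "fp_reduced G H (Inr y # Inl x # w) =
     (y \<in> carrier H \<and> y \<noteq> \<one>\<^bsub>H\<^esub> \<and> fp_reduced G H (Inl x # w))"

fun fp_cons :: "('a, 'c) monoid_scheme \<Rightarrow> ('b, 'd) monoid_scheme \<Rightarrow> ('a + 'b) \<Rightarrow> ('a + 'b) list \<Rightarrow> ('a + 'b) list" where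
  "fp_cons G H (Inl x) [] = (if x = \<one>\<^bsub>G\<^esub> then [] else [Inl x])"
| "fp_cons G H (Inr y) [] = (if y = \<one>\<^bsub>H\<^esub> then [] else [Inr y])"
| "fp_cons G H (Inl x) (Inl x' # w) =
     (if x \<otimes>\<^bsub>G\<^esub> x' = \<one>\<^bsub>G\<^esub> then w else Inl (x \<otimes>\<^bsub>G\<^esub> x') # w)"
| "fp_cons G H (Inr y) (Inr y' # w) =
     (if y \<otimes>\<^bsub>H\<^esub> y' = \<one>\<^bsub>H\<^esub> then w else Inr (y \<otimes>\<^bsub>H\<^esub> y') # w)"
| "fp_cons G H (Inl x) (Inr y # w) =
     (if x = \<one>\<^bsub>G\<^esub> then Inr y # w else Inl x # Inr y # w)"
| "fp_cons G H (Inr y) (Inl x # w) =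
     (if y = \<one>\<^bsub>H\<^esub> then Inl x # w else Inr y # Inl x # w)"

definition fp_normalize :: "('a, 'c) monoid_scheme \<Rightarrow> ('b, 'd) monoid_scheme \<Rightarrow> ('a + 'b) list \<Rightarrow> ('a + 'b) list" where
  "fp_normalize G H w = foldr (fp_cons G H) w []"

definition free_prod :: "('a, 'c) monoid_scheme \<Rightarrow> ('b, 'd) monoid_scheme \<Rightarrow> ('a + 'b) list monoid" where
  "free_prod G H = \<lparr> carrier = {w. fp_reduced G H w},
                     monoid.mult = (\<lambda>u v. fp_normalize G H (u @ v)),
                     one = [] \<rparr>"

definition group_rank :: "('a, 'c) monoid_scheme \<Rightarrow> nat" where
  "group_rank G = (LEAST n. \<exists>S. S \<subseteq> carrier G \<and> finite S \<and> card S = n \<and> generate G S = carrier G)"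

definition Fix :: "('a, 'c) monoid_scheme \<Rightarrow> ('a \<Rightarrow> 'a) \<Rightarrow> 'a set" where
  "Fix G \<phi> = {g \<in> carrier G. \<phi> g = g}"

abbreviation Z2 :: "(int \<times> int) monoid" where
  "Z2 \<equiv> integer_group \<times>\<times> integer_group"

definition GZ :: "(int + int \<times> int) list monoid" where
  "GZ = free_prod integer_group Z2"

definition gen_t :: "(int + int \<times> int) list" where "gen_t = [Inl 1]"
definition gen_a :: "(int + int \<times> int) list" where "gen_a = [Inr (1, 0)]"
definition gen_b :: "(int + int \<times> int) list" where "gen_b = [Inr (0, 1)]"

text \<open>The endomorphism determined by \<open>t \<mapsto> ta, a \<mapsto> a, b \<mapsto> b\<close>:
  a letter \<open>t^n\<close> is sent to \<open>(ta)^n\<close>, a letter \<open>a^i b^j\<close> is fixed, and the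
  images of the letters are multiplied in \<open>GZ\<close>.\<close>
definition phi_letter :: "int + int \<times> int \<Rightarrow> (int + int \<times> int) list" where
  "phi_letter l = (case l of
       Inl n \<Rightarrow> (gen_t \<otimes>\<^bsub>GZ\<^esub> gen_a) [^]\<^bsub>GZ\<^esub> n
     | Inr p \<Rightarrow> [Inr p])"

definition phi :: "(int + int \<times> int) list \<Rightarrow> (int + int \<times> int) list" where
  "phi w = foldr (\<lambda>l acc. phi_letter l \<otimes>\<^bsub>GZ\<^esub> acc) w \<one>\<^bsub>GZ\<^esub>"

end

theory Submission
  imports Defs
begin

text \<open>Every element of \<open>\<langle>t\<rangle> * \<langle>a, b\<rangle>\<close> has a unique normal form
  \<open>h\<^sub>0 t\<^bsup>e\<^sub>1\<^esup> h\<^sub>1 \<cdots> t\<^bsup>e\<^sub>k\<^esup> h\<^sub>k\<close> with \<open>e\<^sub>i = \<plusminus>1\<close> and \<open>h\<^sub>i \<in> \<langle>a, b\<rangle>\<close>.  Since \<open>\<phi>(t) = t a\<close> and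
  \<open>\<phi>(t\<inverse>) = a\<inverse> t\<inverse>\<close>, the automorphism \<open>\<phi>\<close> keeps the exponents \<open>e\<^sub>i\<close> and only moves powers
  of \<open>a\<close> between neighbouring \<open>h\<^sub>i\<close>; comparing normal forms, an element is fixed exactly when
  its exponents read \<open>1, -1, 1, -1, \<dots>\<close>, i.e.\ when it is a product of elements of
  \<open>\<langle>a, b\<rangle>\<close> and \<open>t \<langle>a, b\<rangle> t\<inverse>\<close>.  The same normal forms show that these two subgroups
  generate their free product, so \<open>Fix \<phi> \<cong> \<int>\<^sup>2 * \<int>\<^sup>2\<close>.  For the ranks, \<open>n\<close> generators have at
  most \<open>2\<^sup>n\<close> products in an elementary abelian \<open>2\<close>-group, while \<open>G\<close> and \<open>Fix \<phi>\<close> map onto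
  \<open>(\<int>/2)\<^sup>3\<close> and \<open>(\<int>/2)\<^sup>4\<close>.\<close>

section \<open>Free products of two groups\<close>

definition fp_lift :: "('k, 'e) monoid_scheme \<Rightarrow> ('a \<Rightarrow> 'k) \<Rightarrow> ('b \<Rightarrow> 'k) \<Rightarrow> ('a + 'b) list \<Rightarrow> 'k" where
  "fp_lift K f g w = foldr (\<lambda>l acc. case_sum f g l \<otimes>\<^bsub>K\<^esub> acc) w \<one>\<^bsub>K\<^esub>"

lemma fp_lift_Nil [simp]: "fp_lift K f g [] = \<one>\<^bsub>K\<^esub>"
  and fp_lift_Cons [simp]: "fp_lift K f g (l # w) = case_sum f g l \<otimes>\<^bsub>K\<^esub> fp_lift K f g w"
  by (simp_all add: fp_lift_def)

lemma (in monoid) fp_lift_closed: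
  "\<forall>l\<in>set w. case_sum f g l \<in> carrier G \<Longrightarrow> fp_lift G f g w \<in> carrier G"
  by (induction w) auto

lemma (in monoid) fp_lift_append:
  assumes "\<forall>l\<in>set u. case_sum f g l \<in> carrier G" "\<forall>l\<in>set v. case_sum f g l \<in> carrier G"
  shows "fp_lift G f g (u @ v) = fp_lift G f g u \<otimes> fp_lift G f g v"
  using assms by (induction u) (auto simp: fp_lift_closed m_assoc)

definition fp_inl :: "('a, 'c) monoid_scheme \<Rightarrow> 'a \<Rightarrow> ('a + 'b) list" where
  "fp_inl G x = (if x = \<one>\<^bsub>G\<^esub> then [] else [Inl x])"

definition fp_inr :: "('b, 'd) monoid_scheme \<Rightarrow> 'b \<Rightarrow> ('a + 'b) list" where
  "fp_inr H y = (if y = \<one>\<^bsub>H\<^esub> then [] else [Inr y])"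

locale free_product = G: group G + H: group H
  for G :: "('a, 'c) monoid_scheme" and H :: "('b, 'd) monoid_scheme"
begin

abbreviation FP :: "('a + 'b) list monoid" where "FP \<equiv> free_prod G H"

definition letter_closed :: "'a + 'b \<Rightarrow> bool" where
  "letter_closed l = (case l of Inl x \<Rightarrow> x \<in> carrier G | Inr y \<Rightarrow> y \<in> carrier H)"

definition letter_nontrivial :: "'a + 'b \<Rightarrow> bool" where
  "letter_nontrivial l = (case l of Inl x \<Rightarrow> x \<noteq> \<one>\<^bsub>G\<^esub> | Inr y \<Rightarrow> y \<noteq> \<one>\<^bsub>H\<^esub>)"

lemma letter_closed_simps [simp]:
  "letter_closed (Inl x) = (x \<in> carrier G)" "letter_closed (Inr y) = (y \<in> carrier H)"
  by (simp_all add: letter_closed_def)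

lemma letter_nontrivial_simps [simp]:
  "letter_nontrivial (Inl x) = (x \<noteq> \<one>\<^bsub>G\<^esub>)" "letter_nontrivial (Inr y) = (y \<noteq> \<one>\<^bsub>H\<^esub>)"
  by (simp_all add: letter_nontrivial_def)

lemma fp_reduced_Cons:
  "fp_reduced G H (l # w) \<longleftrightarrow>
     letter_closed l \<and> letter_nontrivial l \<and> fp_reduced G H w \<and> (w = [] \<or> isl (hd w) \<noteq> isl l)"
proof (induction w arbitrary: l)
  case Nil
  then show ?case by (cases l) auto
next
  case (Cons a w)
  then show ?case by (cases l; cases a) auto
qed

declare fp_reduced.simps(2-) [simp del]

lemma fp_reduced_tl: "fp_reduced G H (l # w) \<Longrightarrow> fp_reduced G H w"
  by (simp add: fp_reduced_Cons)

lemma fp_reduced_letter_closed: "fp_reduced G H w \<Longrightarrow> l \<in> set w \<Longrightarrow> letter_closed l"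
  by (induction w) (auto simp: fp_reduced_Cons)

lemma fp_reduced_fp_cons:
  "letter_closed l \<Longrightarrow> fp_reduced G H w \<Longrightarrow> fp_reduced G H (fp_cons G H l w)"
  by (cases l; cases w; simp add: fp_reduced_Cons; rename_tac a w'; case_tac a; auto simp: fp_reduced_Cons)

lemma fp_cons_reduced: "fp_reduced G H (l # w) \<Longrightarrow> fp_cons G H l w = l # w"
  by (cases l; cases w; simp add: fp_reduced_Cons; rename_tac a w'; case_tac a; auto simp: fp_reduced_Cons)

lemma fp_cons_one:
  "fp_reduced G H w \<Longrightarrow> fp_cons G H (Inl \<one>\<^bsub>G\<^esub>) w = w"
  "fp_reduced G H w \<Longrightarrow> fp_cons G H (Inr \<one>\<^bsub>H\<^esub>) w = w"
  by (cases w; simp; rename_tac a w'; case_tac a; auto simp: fp_reduced_Cons)+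

lemma fp_cons_fp_cons_Inl:
  assumes "x \<in> carrier G" "y \<in> carrier G" "fp_reduced G H w"
  shows "fp_cons G H (Inl x) (fp_cons G H (Inl y) w) = fp_cons G H (Inl (x \<otimes>\<^bsub>G\<^esub> y)) w"
proof (cases w)
  case (Cons a w')
  show ?thesis
  proof (cases a)
    case (Inl z)
    with assms Cons have z: "z \<in> carrier G" by (simp add: fp_reduced_Cons)
    show ?thesis
    proof (cases "y \<otimes>\<^bsub>G\<^esub> z = \<one>\<^bsub>G\<^esub>")
      case True
      then have "x \<otimes>\<^bsub>G\<^esub> y \<otimes>\<^bsub>G\<^esub> z = x" using assms z by (simp add: G.m_assoc)
      with True Cons Inl assms show ?thesis
        by (cases w'; simp add: fp_reduced_Cons; rename_tac b w''; case_tac b; auto simp: fp_reduced_Cons)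
    qed (use Cons Inl assms z in \<open>auto simp: G.m_assoc\<close>)
  qed (use Cons assms in auto)
qed (use assms in auto)

lemma fp_cons_fp_cons_Inr:
  assumes "x \<in> carrier H" "y \<in> carrier H" "fp_reduced G H w"
  shows "fp_cons G H (Inr x) (fp_cons G H (Inr y) w) = fp_cons G H (Inr (x \<otimes>\<^bsub>H\<^esub> y)) w"
proof (cases w)
  case (Cons a w')
  show ?thesis
  proof (cases a)
    case (Inr z)
    with assms Cons have z: "z \<in> carrier H" by (simp add: fp_reduced_Cons)
    show ?thesis
    proof (cases "y \<otimes>\<^bsub>H\<^esub> z = \<one>\<^bsub>H\<^esub>")
      case True
      then have "x \<otimes>\<^bsub>H\<^esub> y \<otimes>\<^bsub>H\<^esub> z = x" using assms z by (simp add: H.m_assoc)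
      with True Cons Inr assms show ?thesis
        by (cases w'; simp add: fp_reduced_Cons; rename_tac b w''; case_tac b; auto simp: fp_reduced_Cons)
    qed (use Cons Inr assms z in \<open>auto simp: H.m_assoc\<close>)
  qed (use Cons assms in auto)
qed (use assms in auto)

lemma fp_reduced_foldr_fp_cons:
  "\<forall>l\<in>set u. letter_closed l \<Longrightarrow> fp_reduced G H w \<Longrightarrow> fp_reduced G H (foldr (fp_cons G H) u w)"
  by (induction u) (auto intro: fp_reduced_fp_cons)

lemma fp_reduced_fp_normalize: "\<forall>l\<in>set u. letter_closed l \<Longrightarrow> fp_reduced G H (fp_normalize G H u)"
  unfolding fp_normalize_def by (rule fp_reduced_foldr_fp_cons) auto

lemma fp_normalize_Nil: "fp_normalize G H [] = []"
  and fp_normalize_Cons: "fp_normalize G H (l # u) = fp_cons G H l (fp_normalize G H u)"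
  by (simp_all add: fp_normalize_def)

lemma fp_normalize_reduced: "fp_reduced G H w \<Longrightarrow> fp_normalize G H w = w"
  by (induction w) (simp_all add: fp_normalize_Nil fp_normalize_Cons fp_cons_reduced fp_reduced_tl)

lemma fp_normalize_append: "fp_normalize G H (u @ v) = foldr (fp_cons G H) u (fp_normalize G H v)"
  by (simp add: fp_normalize_def)

text \<open>Van der Waerden's trick: letters act on reduced words by \<open>fp_cons\<close>, compatibly with the
  group laws of the factors, and associativity of \<open>free_prod\<close> follows.\<close>

lemma foldr_fp_cons_fp_cons:
  assumes "letter_closed l" "fp_reduced G H u" "fp_reduced G H w"
  shows "foldr (fp_cons G H) (fp_cons G H l u) w = fp_cons G H l (foldr (fp_cons G H) u w)"
proof (cases u)
  case Nil
  with assms show ?thesis by (cases l) (auto simp: fp_cons_one)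
next
  case (Cons a u')
  have u': "fp_reduced G H u'" "letter_closed a" using assms Cons by (auto simp: fp_reduced_Cons)
  have reduced: "fp_reduced G H (foldr (fp_cons G H) v w)" if "fp_reduced G H v" for v
    using fp_reduced_foldr_fp_cons fp_reduced_letter_closed that assms(3) by blast
  show ?thesis
    using Cons assms u' reduced[OF u'(1)] reduced[OF assms(2)]
    by (cases l; cases a) (auto simp: fp_cons_fp_cons_Inl fp_cons_fp_cons_Inr fp_cons_one)
qed

lemma foldr_fp_cons_fp_normalize:
  assumes "\<forall>l\<in>set u. letter_closed l" "fp_reduced G H w"
  shows "foldr (fp_cons G H) (fp_normalize G H u) w = foldr (fp_cons G H) u w"
  using assms(1)
  by (induction u)
     (simp_all add: fp_normalize_Nil fp_normalize_Cons
       foldr_fp_cons_fp_cons[OF _ fp_reduced_fp_normalize assms(2)])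

lemma free_prod_carrier [simp]: "carrier FP = {w. fp_reduced G H w}"
  and free_prod_one [simp]: "\<one>\<^bsub>FP\<^esub> = []"
  and free_prod_mult: "u \<otimes>\<^bsub>FP\<^esub> v = fp_normalize G H (u @ v)"
  by (simp_all add: free_prod_def)

lemma free_prod_mult_reduced:
  "fp_reduced G H u \<Longrightarrow> fp_reduced G H v \<Longrightarrow> u \<otimes>\<^bsub>FP\<^esub> v = foldr (fp_cons G H) u v"
  by (simp add: free_prod_mult fp_normalize_append fp_normalize_reduced)

lemma free_prod_mult_letter: "fp_reduced G H w \<Longrightarrow> [l] \<otimes>\<^bsub>FP\<^esub> w = fp_cons G H l w"
  by (simp add: free_prod_mult fp_normalize_Cons fp_normalize_reduced)

lemma monoid_free_prod: "monoid FP"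
proof (rule monoidI)
  fix x y z assume "x \<in> carrier FP" "y \<in> carrier FP" "z \<in> carrier FP"
  then have x: "fp_reduced G H x" and y: "fp_reduced G H y" and z: "fp_reduced G H z" by simp_all
  have letters: "\<forall>l\<in>set (u @ v). letter_closed l" if "fp_reduced G H u" "fp_reduced G H v" for u v
    using that fp_reduced_letter_closed by fastforce
  show "x \<otimes>\<^bsub>FP\<^esub> y \<in> carrier FP"
    using fp_reduced_fp_normalize[OF letters[OF x y]] by (simp add: free_prod_mult)
  have "x \<otimes>\<^bsub>FP\<^esub> y \<otimes>\<^bsub>FP\<^esub> z = foldr (fp_cons G H) (fp_normalize G H (x @ y)) z"
    using z by (simp only: free_prod_mult fp_normalize_append fp_normalize_reduced)
  also have "\<dots> = foldr (fp_cons G H) (x @ y) z"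
    by (rule foldr_fp_cons_fp_normalize[OF letters[OF x y] z])
  also have "\<dots> = x \<otimes>\<^bsub>FP\<^esub> (y \<otimes>\<^bsub>FP\<^esub> z)"
    using z fp_reduced_fp_normalize[OF letters[OF y z]]
    by (simp add: free_prod_mult fp_normalize_append fp_normalize_reduced)
  finally show "x \<otimes>\<^bsub>FP\<^esub> y \<otimes>\<^bsub>FP\<^esub> z = x \<otimes>\<^bsub>FP\<^esub> (y \<otimes>\<^bsub>FP\<^esub> z)" .
qed (auto simp: free_prod_mult fp_normalize_reduced)

interpretation FP: monoid FP by (rule monoid_free_prod)

lemma group_free_prod: "group FP"
proof (rule FP.group_l_invI)
  fix w assume "w \<in> carrier FP"
  then have "fp_reduced G H w" by simp
  then show "\<exists>v\<in>carrier FP. v \<otimes>\<^bsub>FP\<^esub> w = \<one>\<^bsub>FP\<^esub>"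
  proof (induction w)
    case (Cons l w)
    have w: "fp_reduced G H w" and l: "letter_closed l" "letter_nontrivial l"
      using Cons.prems by (auto simp: fp_reduced_Cons)
    obtain v where v: "v \<in> carrier FP" "v \<otimes>\<^bsub>FP\<^esub> w = []" using Cons.IH[OF w] by auto
    define l' where "l' = case_sum (\<lambda>x. Inl (inv\<^bsub>G\<^esub> x)) (\<lambda>y. Inr (inv\<^bsub>H\<^esub> y)) l"
    have l'_closed: "[l'] \<in> carrier FP" and l_closed: "[l] \<in> carrier FP"
      using l by (cases l; simp add: l'_def fp_reduced_Cons)+
    have l'_l: "[l'] \<otimes>\<^bsub>FP\<^esub> [l] = []"
      using l by (cases l) (auto simp: free_prod_mult l'_def fp_normalize_def)
    have "l # w = [l] \<otimes>\<^bsub>FP\<^esub> w"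
      using free_prod_mult_letter fp_cons_reduced Cons.prems w by simp
    moreover have "w \<in> carrier FP" using w by simp
    ultimately have "(v \<otimes>\<^bsub>FP\<^esub> [l']) \<otimes>\<^bsub>FP\<^esub> (l # w) = v \<otimes>\<^bsub>FP\<^esub> (([l'] \<otimes>\<^bsub>FP\<^esub> [l]) \<otimes>\<^bsub>FP\<^esub> w)"
      using v l'_closed l_closed by (simp add: FP.m_assoc del: free_prod_carrier)
    also have "\<dots> = []" using l'_l v w by (simp add: free_prod_mult fp_normalize_reduced)
    finally show ?case using v l'_closed FP.m_closed by (metis free_prod_one)
  qed (auto simp: free_prod_mult fp_normalize_reduced)
qed

interpretation FP: group FP by (rule group_free_prod)

lemma fp_inl_closed: "x \<in> carrier G \<Longrightarrow> fp_inl G x \<in> carrier FP"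
  and fp_inr_closed: "y \<in> carrier H \<Longrightarrow> fp_inr H y \<in> carrier FP"
  by (auto simp: fp_inl_def fp_inr_def fp_reduced_Cons)

lemma fp_inl_mult: "fp_reduced G H w \<Longrightarrow> fp_inl G x \<otimes>\<^bsub>FP\<^esub> w = fp_cons G H (Inl x) w"
  and fp_inr_mult: "fp_reduced G H w \<Longrightarrow> fp_inr H y \<otimes>\<^bsub>FP\<^esub> w = fp_cons G H (Inr y) w"
  by (auto simp: fp_inl_def fp_inr_def free_prod_mult_reduced fp_cons_one fp_reduced_Cons
      free_prod_mult_letter)

lemma fp_inl_hom: "fp_inl G \<in> hom G FP"
proof (rule homI)
  fix x y assume "x \<in> carrier G" "y \<in> carrier G"
  then show "fp_inl G (x \<otimes>\<^bsub>G\<^esub> y) = fp_inl G x \<otimes>\<^bsub>FP\<^esub> fp_inl G y"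
    using fp_inl_mult[OF fp_inl_closed[of y, simplified]] fp_cons_fp_cons_Inl[of x y "[]"]
    by (simp add: fp_inl_def[of _ y]) (simp add: fp_inl_def)
qed (rule fp_inl_closed)

lemma fp_inr_hom: "fp_inr H \<in> hom H FP"
proof (rule homI)
  fix x y assume "x \<in> carrier H" "y \<in> carrier H"
  then show "fp_inr H (x \<otimes>\<^bsub>H\<^esub> y) = fp_inr H x \<otimes>\<^bsub>FP\<^esub> fp_inr H y"
    using fp_inr_mult[OF fp_inr_closed[of y, simplified]] fp_cons_fp_cons_Inr[of x y "[]"]
    by (simp add: fp_inr_def[of _ y]) (simp add: fp_inr_def)
qed (rule fp_inr_closed)

lemma reduced_Cons_eq_mult:
  assumes "fp_reduced G H (l # w)"
  shows "l # w = case_sum (fp_inl G) (fp_inr H) l \<otimes>\<^bsub>FP\<^esub> w"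
  using assms fp_reduced_tl[OF assms] fp_cons_reduced[OF assms]
  by (cases l) (simp_all add: fp_inl_mult fp_inr_mult)

lemma free_prod_induct [case_names one mult, consumes 1]:
  assumes "w \<in> carrier FP" "P []"
    and "\<And>l w. letter_closed l \<Longrightarrow> w \<in> carrier FP \<Longrightarrow> P w \<Longrightarrow>
           P (case_sum (fp_inl G) (fp_inr H) l \<otimes>\<^bsub>FP\<^esub> w)"
  shows "P w"
proof -
  from assms(1) have "fp_reduced G H w" by simp
  then show ?thesis
  proof (induction w)
    case (Cons l w)
    have "letter_closed l" "fp_reduced G H w" using Cons.prems by (simp_all add: fp_reduced_Cons)
    then show ?case
      using assms(3)[of l w] Cons.IH reduced_Cons_eq_mult[OF Cons.prems] by simp
  qed (rule assms(2))
qed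

lemma generate_free_prod: "generate FP (fp_inl G ` carrier G \<union> fp_inr H ` carrier H) = carrier FP"
proof
  show "generate FP (fp_inl G ` carrier G \<union> fp_inr H ` carrier H) \<subseteq> carrier FP"
    by (rule FP.generate_incl) (use fp_inl_closed fp_inr_closed in auto)
  show "carrier FP \<subseteq> generate FP (fp_inl G ` carrier G \<union> fp_inr H ` carrier H)"
  proof
    fix w assume "w \<in> carrier FP"
    then show "w \<in> generate FP (fp_inl G ` carrier G \<union> fp_inr H ` carrier H)"
    proof (induction rule: free_prod_induct)
      case (mult l w)
      then show ?case by (cases l) (simp_all add: generate.eng generate.incl)
    qed (metis free_prod_one generate.one)
  qed
qed

lemma free_prod_hom_eqI:
  assumes "group K" "h \<in> hom FP K" "h' \<in> hom FP K"
    and "\<And>x. x \<in> carrier G \<Longrightarrow> h (fp_inl G x) = h' (fp_inl G x)"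
    and "\<And>y. y \<in> carrier H \<Longrightarrow> h (fp_inr H y) = h' (fp_inr H y)"
    and "w \<in> carrier FP"
  shows "h w = h' w"
  using assms(6)
proof (induction rule: free_prod_induct)
  case one
  then show ?case using hom_one[OF assms(2) group_free_prod assms(1)] hom_one[OF assms(3) group_free_prod assms(1)]
    by simp
next
  case (mult l w)
  then show ?case using assms(4,5) fp_inl_closed fp_inr_closed
    by (cases l) (simp_all add: hom_mult[OF assms(2)] hom_mult[OF assms(3)])
qed

end

locale free_product_lift = free_product + K: group K for K :: "('k, 'e) monoid_scheme" +
  fixes f g
  assumes f: "f \<in> hom G K" and g: "g \<in> hom H K"
begin

lemma case_sum_closed: "letter_closed l \<Longrightarrow> case_sum f g l \<in> carrier K"
  using f g by (cases l) (auto simp: hom_def)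

lemma fp_lift_closed: "\<forall>l\<in>set w. letter_closed l \<Longrightarrow> fp_lift K f g w \<in> carrier K"
  by (auto intro: K.fp_lift_closed case_sum_closed)

lemma fp_lift_fp_cons:
  assumes l: "letter_closed l" and w: "fp_reduced G H w"
  shows "fp_lift K f g (fp_cons G H l w) = case_sum f g l \<otimes>\<^bsub>K\<^esub> fp_lift K f g w"
proof -
  have f1: "f \<one>\<^bsub>G\<^esub> = \<one>\<^bsub>K\<^esub>" and g1: "g \<one>\<^bsub>H\<^esub> = \<one>\<^bsub>K\<^esub>"
    using hom_one[OF f G.is_group K.is_group] hom_one[OF g H.is_group K.is_group] .
  show ?thesis
  proof (cases w)
    case Nil
    with l f1 g1 show ?thesis by (cases l) auto
  next
    case (Cons a w')
    have a: "letter_closed a" and w': "\<forall>l\<in>set w'. letter_closed l"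
      using w Cons fp_reduced_letter_closed by auto
    with l have "fp_lift K f g w' \<in> carrier K" "case_sum f g a \<in> carrier K" "case_sum f g l \<in> carrier K"
      by (auto intro: fp_lift_closed case_sum_closed)
    with l a Cons f1 g1 show ?thesis
      by (cases l; cases a) (auto simp: K.m_assoc[symmetric] hom_mult[OF f, symmetric] hom_mult[OF g, symmetric])
  qed
qed

lemma fp_lift_fp_normalize:
  "\<forall>l\<in>set u. letter_closed l \<Longrightarrow> fp_lift K f g (fp_normalize G H u) = fp_lift K f g u"
  by (induction u) (simp_all add: fp_normalize_Nil fp_normalize_Cons fp_lift_fp_cons fp_reduced_fp_normalize)

lemma fp_lift_hom: "fp_lift K f g \<in> hom FP K"
proof (rule homI)
  fix u v assume "u \<in> carrier FP" "v \<in> carrier FP"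
  then have letters: "\<forall>l\<in>set (u @ v). letter_closed l" using fp_reduced_letter_closed by fastforce
  then have "fp_lift K f g (u \<otimes>\<^bsub>FP\<^esub> v) = fp_lift K f g (u @ v)"
    by (simp add: free_prod_mult fp_lift_fp_normalize)
  also have "\<dots> = fp_lift K f g u \<otimes>\<^bsub>K\<^esub> fp_lift K f g v"
    using letters by (intro K.fp_lift_append) (auto intro: case_sum_closed)
  finally show "fp_lift K f g (u \<otimes>\<^bsub>FP\<^esub> v) = fp_lift K f g u \<otimes>\<^bsub>K\<^esub> fp_lift K f g v" .
qed (auto intro: fp_lift_closed fp_reduced_letter_closed)

lemma fp_lift_inl: "x \<in> carrier G \<Longrightarrow> fp_lift K f g (fp_inl G x) = f x"
  and fp_lift_inr: "y \<in> carrier H \<Longrightarrow> fp_lift K f g (fp_inr H y) = g y"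
  using f g hom_one[OF f G.is_group K.is_group] hom_one[OF g H.is_group K.is_group]
  by (auto simp: fp_inl_def fp_inr_def hom_in_carrier)

end

section \<open>The automorphism \<open>\<phi>\<close> of \<open>\<int> * \<int>\<^sup>2\<close>\<close>

lemma (in group) subgroup_Fix:
  assumes "\<phi> \<in> hom G G"
  shows "subgroup (Fix G \<phi>) G"
proof -
  interpret \<phi>: group_hom G G \<phi>
    using assms by (intro group_hom.intro group_hom_axioms.intro is_group)
  show ?thesis
    by (rule subgroupI) (auto simp: Fix_def)
qed

lemma (in group) conjugation_hom: "g \<in> carrier G \<Longrightarrow> (\<lambda>x. g \<otimes> x \<otimes> inv g) \<in> hom G G"
  by (rule homI) (simp_all add: m_assoc flip: m_assoc[of "inv g"])

lemma group_Z2: "group Z2"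
  by (intro DirProd_group group_integer_group)

interpretation GZ_free: free_product integer_group Z2
  by (intro free_product.intro group_integer_group group_Z2)

type_synonym word = "(int + int \<times> int) list"

abbreviation tpow :: "int \<Rightarrow> word" where "tpow \<equiv> fp_inl integer_group"
abbreviation abpow :: "int \<times> int \<Rightarrow> word" where "abpow \<equiv> fp_inr Z2"

lemma group_GZ: "group GZ"
  using GZ_free.group_free_prod by (simp add: GZ_def)

interpretation GZ: group GZ by (rule group_GZ)

lemma GZ_carrier: "carrier GZ = {w. fp_reduced integer_group Z2 w}"
  and GZ_one [simp]: "\<one>\<^bsub>GZ\<^esub> = []"
  by (simp_all add: GZ_def)

lemma Nil_in_GZ [simp]: "[] \<in> carrier GZ"
  using GZ.one_closed by simp

lemma GZ_Nil_mult [simp]: "w \<in> carrier GZ \<Longrightarrow> [] \<otimes>\<^bsub>GZ\<^esub> w = w"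
  and GZ_mult_Nil [simp]: "w \<in> carrier GZ \<Longrightarrow> w \<otimes>\<^bsub>GZ\<^esub> [] = w"
  using GZ.l_one GZ.r_one by simp_all

lemma tpow_hom: "tpow \<in> hom integer_group GZ"
  and abpow_hom: "abpow \<in> hom Z2 GZ"
  using GZ_free.fp_inl_hom GZ_free.fp_inr_hom by (simp_all add: GZ_def)

lemma tpow_closed [simp]: "tpow n \<in> carrier GZ"
  and abpow_closed [simp]: "abpow p \<in> carrier GZ"
  using hom_in_carrier[OF tpow_hom] hom_in_carrier[OF abpow_hom] by simp_all

lemma tpow_mult: "tpow m \<otimes>\<^bsub>GZ\<^esub> tpow n = tpow (m + n)"
  using hom_mult[OF tpow_hom] by simp

lemma abpow_mult: "abpow (i, j) \<otimes>\<^bsub>GZ\<^esub> abpow (k, l) = abpow (i + k, j + l)"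
  using hom_mult[OF abpow_hom, of "(i, j)" "(k, l)"] by simp

lemma tpow_0 [simp]: "tpow 0 = []"
  and abpow_0 [simp]: "abpow (0, 0) = []"
  by (simp_all add: fp_inl_def fp_inr_def)

lemma tpow_mult_assoc: "w \<in> carrier GZ \<Longrightarrow> tpow m \<otimes>\<^bsub>GZ\<^esub> (tpow n \<otimes>\<^bsub>GZ\<^esub> w) = tpow (m + n) \<otimes>\<^bsub>GZ\<^esub> w"
  by (simp add: GZ.m_assoc[symmetric] tpow_mult)

lemma abpow_mult_assoc:
  "w \<in> carrier GZ \<Longrightarrow> abpow (i, j) \<otimes>\<^bsub>GZ\<^esub> (abpow (k, l) \<otimes>\<^bsub>GZ\<^esub> w) = abpow (i + k, j + l) \<otimes>\<^bsub>GZ\<^esub> w"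
  by (simp add: GZ.m_assoc[symmetric] abpow_mult)

lemma tpow_inv: "inv\<^bsub>GZ\<^esub> (tpow n) = tpow (- n)"
  by (rule GZ.inv_equality) (simp_all add: tpow_mult)

lemma abpow_inv: "inv\<^bsub>GZ\<^esub> (abpow (i, j)) = abpow (- i, - j)"
  by (rule GZ.inv_equality) (simp_all add: abpow_mult)

lemma tpow_eq_pow: "tpow n = tpow 1 [^]\<^bsub>GZ\<^esub> n"
  using hom_int_pow[OF tpow_hom, of 1 n] by simp

lemma tpow_mult_eq_fp_cons: "w \<in> carrier GZ \<Longrightarrow> tpow n \<otimes>\<^bsub>GZ\<^esub> w = fp_cons integer_group Z2 (Inl n) w"
  and abpow_mult_eq_fp_cons: "w \<in> carrier GZ \<Longrightarrow> abpow p \<otimes>\<^bsub>GZ\<^esub> w = fp_cons integer_group Z2 (Inr p) w"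
  using GZ_free.fp_inl_mult GZ_free.fp_inr_mult by (simp_all add: GZ_def)

lemma gen_t_eq: "gen_t = tpow 1"
  and gen_a_eq: "gen_a = abpow (1, 0)"
  and gen_b_eq: "gen_b = abpow (0, 1)"
  by (simp_all add: gen_t_def gen_a_def gen_b_def fp_inl_def fp_inr_def)

definition ta_pow :: "int \<Rightarrow> word" where
  "ta_pow n = (gen_t \<otimes>\<^bsub>GZ\<^esub> gen_a) [^]\<^bsub>GZ\<^esub> n"

definition ta_inv_pow :: "int \<Rightarrow> word" where
  "ta_inv_pow n = (gen_t \<otimes>\<^bsub>GZ\<^esub> inv\<^bsub>GZ\<^esub> gen_a) [^]\<^bsub>GZ\<^esub> n"

lemma ta_pow_hom: "ta_pow \<in> hom integer_group GZ"
  and ta_inv_pow_hom: "ta_inv_pow \<in> hom integer_group GZ"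
  unfolding ta_pow_def ta_inv_pow_def
  by (simp_all add: GZ.hom_integer_group_pow gen_t_eq gen_a_eq)

interpretation phi_lift: free_product_lift integer_group Z2 GZ ta_pow abpow
  by (intro free_product_lift.intro free_product_lift_axioms.intro GZ_free.free_product_axioms
      group_GZ ta_pow_hom abpow_hom)

interpretation psi_lift: free_product_lift integer_group Z2 GZ ta_inv_pow abpow
  by (intro free_product_lift.intro free_product_lift_axioms.intro GZ_free.free_product_axioms
      group_GZ ta_inv_pow_hom abpow_hom)

definition psi :: "word \<Rightarrow> word" where
  "psi = fp_lift GZ ta_inv_pow abpow"

lemma phi_eq_fp_lift: "phi = fp_lift GZ ta_pow abpow"
proof
  fix w show "phi w = fp_lift GZ ta_pow abpow w"
  proof (induction w)
    case (Cons l w)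
    have "fp_lift GZ ta_pow abpow w \<in> carrier GZ"
      by (rule phi_lift.fp_lift_closed) (auto simp: GZ_free.letter_closed_def split: sum.splits)
    then have "phi_letter l \<otimes>\<^bsub>GZ\<^esub> fp_lift GZ ta_pow abpow w
               = case_sum ta_pow abpow l \<otimes>\<^bsub>GZ\<^esub> fp_lift GZ ta_pow abpow w"
      by (cases l) (simp_all add: phi_letter_def ta_pow_def
          abpow_mult_eq_fp_cons GZ_free.free_prod_mult_letter[folded GZ_def] GZ_carrier)
    with Cons show ?case by (simp add: phi_def)
  qed (simp add: phi_def)
qed

lemma phi_hom: "phi \<in> hom GZ GZ"
  and psi_hom: "psi \<in> hom GZ GZ"
  using phi_lift.fp_lift_hom psi_lift.fp_lift_hom by (simp_all add: phi_eq_fp_lift psi_def GZ_def)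

interpretation phi: group_hom GZ GZ phi
  by (intro group_hom.intro group_hom_axioms.intro group_GZ phi_hom)

interpretation psi: group_hom GZ GZ psi
  by (intro group_hom.intro group_hom_axioms.intro group_GZ psi_hom)

lemma phi_tpow: "phi (tpow n) = ta_pow n"
  and phi_abpow: "phi (abpow p) = abpow p"
  and psi_tpow: "psi (tpow n) = ta_inv_pow n"
  and psi_abpow: "psi (abpow p) = abpow p"
  using phi_lift.fp_lift_inl phi_lift.fp_lift_inr psi_lift.fp_lift_inl psi_lift.fp_lift_inr
  by (simp_all add: phi_eq_fp_lift psi_def)

lemma phi_t: "phi gen_t = gen_t \<otimes>\<^bsub>GZ\<^esub> gen_a"
  by (simp add: gen_t_eq gen_a_eq phi_tpow ta_pow_def GZ.int_pow_1)

lemma phi_t_tpow: "phi (tpow 1) = tpow 1 \<otimes>\<^bsub>GZ\<^esub> abpow (1, 0)"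
  using phi_t by (simp add: gen_t_eq gen_a_eq)

lemma psi_t_tpow: "psi (tpow 1) = tpow 1 \<otimes>\<^bsub>GZ\<^esub> abpow (- 1, 0)"
  by (simp add: psi_tpow ta_inv_pow_def gen_t_eq gen_a_eq abpow_inv)

lemma GZ_hom_eqI:
  "h \<in> hom GZ GZ \<Longrightarrow> (\<And>n. h (tpow n) = tpow n) \<Longrightarrow> (\<And>p. h (abpow p) = abpow p) \<Longrightarrow>
     w \<in> carrier GZ \<Longrightarrow> h w = w"
  using GZ_free.free_prod_hom_eqI[of GZ h id w] group_GZ
  by (simp add: GZ_def[symmetric] hom_def)

lemma phi_psi: "w \<in> carrier GZ \<Longrightarrow> phi (psi w) = w"
proof (rule GZ_hom_eqI)
  show "(\<lambda>w. phi (psi w)) \<in> hom GZ GZ"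
    using hom_compose[OF psi_hom phi_hom] by (simp add: comp_def)
  fix n :: int
  have "phi (psi (tpow n)) = (phi (tpow 1) \<otimes>\<^bsub>GZ\<^esub> abpow (- 1, 0)) [^]\<^bsub>GZ\<^esub> n"
    by (simp add: psi_tpow ta_inv_pow_def phi.hom_int_pow phi.hom_inv gen_t_eq gen_a_eq abpow_inv
        phi_abpow)
  also have "\<dots> = tpow n"
    by (simp add: phi_t_tpow GZ.m_assoc abpow_mult tpow_eq_pow[of n])
  finally show "phi (psi (tpow n)) = tpow n" .
qed (simp_all add: psi_abpow phi_abpow)

lemma psi_phi: "w \<in> carrier GZ \<Longrightarrow> psi (phi w) = w"
proof (rule GZ_hom_eqI)
  show "(\<lambda>w. psi (phi w)) \<in> hom GZ GZ"
    using hom_compose[OF phi_hom psi_hom] by (simp add: comp_def)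
  fix n :: int
  have "psi (phi (tpow n)) = (psi (tpow 1) \<otimes>\<^bsub>GZ\<^esub> abpow (1, 0)) [^]\<^bsub>GZ\<^esub> n"
    by (simp add: phi_tpow ta_pow_def psi.hom_int_pow gen_t_eq gen_a_eq psi_abpow)
  also have "\<dots> = tpow n"
    by (simp add: psi_t_tpow GZ.m_assoc abpow_mult tpow_eq_pow[of n])
  finally show "psi (phi (tpow n)) = tpow n" .
qed (simp_all add: psi_abpow phi_abpow)

lemma phi_iso: "phi \<in> Group.iso GZ GZ"
proof -
  have "bij_betw phi (carrier GZ) (carrier GZ)"
    by (rule bij_betwI[where g = psi]) (simp_all add: psi_phi phi_psi)
  then show ?thesis using phi_hom by (simp add: Group.iso_def)
qed

section \<open>Normal forms with respect to \<open>t\<close>\<close>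

lemma GZ_reduced_Cons:
  "fp_reduced integer_group Z2 (l # w) \<longleftrightarrow>
     case_sum (\<lambda>n. n \<noteq> 0) (\<lambda>p. p \<noteq> (0, 0)) l \<and> fp_reduced integer_group Z2 w \<and>
     (w = [] \<or> isl (hd w) \<noteq> isl l)"
  by (cases l) (simp_all add: GZ_free.fp_reduced_Cons)

lemma GZ_Cons_eq_fp_cons:
  "fp_reduced integer_group Z2 (l # w) \<Longrightarrow> fp_cons integer_group Z2 l w = l # w"
  by (rule GZ_free.fp_cons_reduced)

text \<open>A pair \<open>(h\<^sub>0, [(e\<^sub>1, h\<^sub>1), \<dots>, (e\<^sub>k, h\<^sub>k)])\<close> with all \<open>e\<^sub>i = \<plusminus>1\<close> stands for the element
  \<open>h\<^sub>0 t\<^bsup>e\<^sub>1\<^esup> h\<^sub>1 \<cdots> t\<^bsup>e\<^sub>k\<^esup> h\<^sub>k\<close>, the \<open>h\<^sub>i\<close> being elements of \<open>\<langle>a, b\<rangle>\<close>.  Requiring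
  \<open>e\<^sub>i = e\<^sub>i\<^sub>+\<^sub>1\<close> whenever \<open>h\<^sub>i = 0\<close> makes the representation unique.\<close>

type_synonym syllables = "(int \<times> (int \<times> int)) list"

fun syll_eval :: "syllables \<Rightarrow> word" where
  "syll_eval [] = []"
| "syll_eval ((e, h) # r) = tpow e \<otimes>\<^bsub>GZ\<^esub> (abpow h \<otimes>\<^bsub>GZ\<^esub> syll_eval r)"

definition nf_eval :: "int \<times> int \<Rightarrow> syllables \<Rightarrow> word" where
  "nf_eval h0 xs = abpow h0 \<otimes>\<^bsub>GZ\<^esub> syll_eval xs"

fun nf_valid :: "syllables \<Rightarrow> bool" where
  "nf_valid [] = True"
| "nf_valid ((e, h) # r) =
     ((e = 1 \<or> e = -1) \<and> nf_valid r \<and> (r \<noteq> [] \<and> h = (0, 0) \<longrightarrow> fst (hd r) = e))"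

fun nf :: "word \<Rightarrow> (int \<times> int) \<times> syllables" where
  "nf [] = ((0, 0), [])"
| "nf (Inr h # w) = (h, snd (nf w))"
| "nf (Inl n # w) =
     ((0, 0), replicate (nat \<bar>n\<bar> - 1) (sgn n, (0, 0)) @ (sgn n, fst (nf w)) # snd (nf w))"

lemma syll_eval_closed [simp]: "syll_eval xs \<in> carrier GZ"
  by (induction xs rule: syll_eval.induct) simp_all

lemma nf_eval_closed [simp]: "nf_eval h xs \<in> carrier GZ"
  by (simp add: nf_eval_def)

lemma nf_valid_exponents: "nf_valid xs \<Longrightarrow> x \<in> set xs \<Longrightarrow> fst x = 1 \<or> fst x = -1"
  by (induction xs rule: nf_valid.induct) auto

lemma nf_valid_replicate:
  assumes "s = 1 \<or> s = -1" "nf_valid ys" "ys \<noteq> [] \<and> h = (0, 0) \<longrightarrow> fst (hd ys) = s"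
  shows "nf_valid (replicate k (s, (0, 0)) @ (s, h) # ys)"
proof (induction k)
  case (Suc k)
  have "fst (hd (replicate k (s, (0::int, 0::int)) @ (s, h) # ys)) = s" by (cases k) auto
  with Suc assms show ?case by simp
qed (use assms in simp)

lemma nf_fst_nonzero:
  "fp_reduced integer_group Z2 w \<Longrightarrow> w \<noteq> [] \<Longrightarrow> \<not> isl (hd w) \<Longrightarrow> fst (nf w) \<noteq> (0, 0)"
  by (cases w rule: nf.cases) (auto simp: GZ_reduced_Cons)

lemma nf_fst_zero:
  "fp_reduced integer_group Z2 w \<Longrightarrow> w = [] \<or> isl (hd w) \<Longrightarrow> fst (nf w) = (0, 0)"
  by (cases w rule: nf.cases) auto

lemma nf_valid_nf: "fp_reduced integer_group Z2 w \<Longrightarrow> nf_valid (snd (nf w))"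
proof (induction w rule: nf.induct)
  case (2 h w)
  then show ?case by (simp add: GZ_reduced_Cons)
next
  case (3 n w)
  have w: "fp_reduced integer_group Z2 w" and n: "n \<noteq> 0" and hd_w: "w = [] \<or> \<not> isl (hd w)"
    using "3.prems" by (auto simp: GZ_reduced_Cons)
  show ?case
    using "3.IH"[OF w] n nf_fst_nonzero[OF w _] hd_w
    by (cases "w = []") (auto intro!: nf_valid_replicate simp: sgn_if)
qed simp

lemma syll_eval_replicate:
  "syll_eval (replicate k (s, (0, 0)) @ ys) = tpow (int k * s) \<otimes>\<^bsub>GZ\<^esub> syll_eval ys"
  by (induction k) (simp_all add: tpow_mult_assoc algebra_simps)

lemma nf_eval_nf: "w \<in> carrier GZ \<Longrightarrow> nf_eval (fst (nf w)) (snd (nf w)) = w"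
proof (induction w rule: nf.induct)
  case (2 h w)
  have w: "w \<in> carrier GZ" and red: "fp_reduced integer_group Z2 (Inr h # w)"
    using "2.prems" by (auto simp: GZ_carrier GZ_reduced_Cons)
  have "fst (nf w) = (0, 0)" using red by (intro nf_fst_zero) (auto simp: GZ_reduced_Cons)
  then have "syll_eval (snd (nf w)) = w" using "2.IH"[OF w] by (simp add: nf_eval_def)
  then show ?case
    using red abpow_mult_eq_fp_cons[OF w] GZ_Cons_eq_fp_cons by (simp add: nf_eval_def)
next
  case (3 n w)
  have w: "w \<in> carrier GZ" and red: "fp_reduced integer_group Z2 (Inl n # w)" and n: "n \<noteq> 0"
    using "3.prems" by (auto simp: GZ_carrier GZ_reduced_Cons)
  have n_split: "int (nat \<bar>n\<bar> - 1) * sgn n + sgn n = n"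
    using n by (cases "n > 0") (auto simp: sgn_if algebra_simps)
  have "nf_eval (fst (nf (Inl n # w))) (snd (nf (Inl n # w)))
      = tpow (int (nat \<bar>n\<bar> - 1) * sgn n) \<otimes>\<^bsub>GZ\<^esub> (tpow (sgn n) \<otimes>\<^bsub>GZ\<^esub> w)"
    using "3.IH"[OF w] by (simp add: nf_eval_def syll_eval_replicate del: syll_eval.simps)
      (simp add: nf_eval_def)
  also have "\<dots> = tpow n \<otimes>\<^bsub>GZ\<^esub> w"
    using w n_split by (simp add: tpow_mult_assoc)
  also have "\<dots> = Inl n # w"
    using tpow_mult_eq_fp_cons[OF w] GZ_Cons_eq_fp_cons[OF red] by simp
  finally show ?case .
qed (simp add: nf_eval_def)

lemma nf_abpow_mult:
  assumes "v \<in> carrier GZ" "fst (nf v) = (0, 0)"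
  shows "nf (abpow h \<otimes>\<^bsub>GZ\<^esub> v) = (h, snd (nf v))"
proof -
  have "v = [] \<or> isl (hd v)"
    using assms nf_fst_nonzero by (auto simp: GZ_carrier)
  with assms show ?thesis
    unfolding abpow_mult_eq_fp_cons[OF assms(1)] by (cases v rule: nf.cases) auto
qed

lemma nf_tpow_mult:
  assumes w: "w \<in> carrier GZ" and nf_w: "nf w = (h, r)" and e: "e = 1 \<or> e = -1"
    and valid: "nf_valid ((e, h) # r)"
  shows "nf (tpow e \<otimes>\<^bsub>GZ\<^esub> w) = ((0, 0), (e, h) # r)"
  unfolding tpow_mult_eq_fp_cons[OF w]
proof (cases w rule: nf.cases)
  case (3 m w')
  have m: "m \<noteq> 0" using w 3 by (simp add: GZ_carrier GZ_reduced_Cons)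
  have h: "h = (0, 0)"
    and r: "r = replicate (nat \<bar>m\<bar> - 1) (sgn m, (0, 0)) @ (sgn m, fst (nf w')) # snd (nf w')"
    using nf_w 3 by auto
  have "fst (hd r) = sgn m" using r by (cases "nat \<bar>m\<bar> - 1") auto
  then have "sgn m = e" using valid h r by simp
  then have "e + m \<noteq> 0" "sgn (e + m) = e" "nat (\<bar>e + m\<bar>) - 1 = nat (\<bar>m\<bar>)"
    using e m by (auto simp: sgn_if split: if_splits)
  moreover have "replicate (nat \<bar>m\<bar>) (e, (0::int, 0::int)) = (e, (0, 0)) # replicate (nat \<bar>m\<bar> - 1) (e, (0, 0))"
    using m by (cases "nat \<bar>m\<bar>") auto
  ultimately show "nf (fp_cons integer_group Z2 (Inl e) w) = ((0, 0), (e, h) # r)"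
    using 3 h r \<open>sgn m = e\<close> by simp
qed (use nf_w e in auto)

lemma nf_nf_eval: "nf_valid xs \<Longrightarrow> nf (nf_eval h0 xs) = (h0, xs)"
proof (induction xs arbitrary: h0)
  case Nil
  then show ?case by (simp add: nf_eval_def) (simp add: fp_inr_def)
next
  case (Cons x r)
  obtain e h where x: "x = (e, h)" by (cases x)
  have e: "e = 1 \<or> e = -1" and r: "nf_valid r" using Cons.prems x by auto
  have "nf (tpow e \<otimes>\<^bsub>GZ\<^esub> nf_eval h r) = ((0, 0), (e, h) # r)"
    using nf_tpow_mult[OF nf_eval_closed Cons.IH[OF r] e] Cons.prems x by simp
  then show ?case
    using nf_abpow_mult[of "tpow e \<otimes>\<^bsub>GZ\<^esub> nf_eval h r" h0] x by (simp add: nf_eval_def)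
qed


text \<open>Under \<open>\<phi>\<close>, the syllable \<open>h\<^sub>i\<close> gains \<open>a\<close> if \<open>e\<^sub>i = 1\<close> (from \<open>\<phi>(t) = t a\<close>) and loses \<open>a\<close> if
  \<open>e\<^sub>i\<^sub>+\<^sub>1 = -1\<close> (from \<open>\<phi>(t\<inverse>) = a\<inverse> t\<inverse>\<close>); \<open>leading_tinv\<close> accounts for the latter.\<close>

definition leading_tinv :: "syllables \<Rightarrow> int" where
  "leading_tinv xs = (if xs \<noteq> [] \<and> fst (hd xs) = -1 then 1 else 0)"

fun phi_sylls :: "syllables \<Rightarrow> syllables" where
  "phi_sylls [] = []"
| "phi_sylls ((e, (i, j)) # r) = (e, (i + (if e = 1 then 1 else 0) - leading_tinv r, j)) # phi_sylls r"

lemma leading_tinv_simps [simp]: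
  "leading_tinv [] = 0" "leading_tinv ((e, h) # r) = (if e = -1 then 1 else 0)"
  by (simp_all add: leading_tinv_def)

lemma phi_tpow_minus_one: "phi (tpow (-1)) = abpow (-1, 0) \<otimes>\<^bsub>GZ\<^esub> tpow (-1)"
proof -
  have "phi (tpow (-1)) = inv\<^bsub>GZ\<^esub> (tpow 1 \<otimes>\<^bsub>GZ\<^esub> abpow (1, 0))"
    using phi.hom_inv[of "tpow 1"] by (simp add: tpow_inv phi_t_tpow)
  then show ?thesis by (simp add: GZ.inv_mult_group tpow_inv abpow_inv)
qed

lemma phi_syll_eval:
  "(\<forall>x\<in>set xs. fst x = 1 \<or> fst x = -1) \<Longrightarrow>
     phi (syll_eval xs) = abpow (- leading_tinv xs, 0) \<otimes>\<^bsub>GZ\<^esub> syll_eval (phi_sylls xs)"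
proof (induction xs rule: phi_sylls.induct)
  case (2 e i j r)
  then have IH: "phi (syll_eval r) = abpow (- leading_tinv r, 0) \<otimes>\<^bsub>GZ\<^esub> syll_eval (phi_sylls r)"
    by simp
  have "phi (syll_eval ((e, (i, j)) # r))
      = phi (tpow e) \<otimes>\<^bsub>GZ\<^esub> (abpow (i - leading_tinv r, j) \<otimes>\<^bsub>GZ\<^esub> syll_eval (phi_sylls r))"
    by (simp add: IH phi_abpow abpow_mult_assoc)
  also have "\<dots> = abpow (- leading_tinv ((e, (i, j)) # r), 0) \<otimes>\<^bsub>GZ\<^esub> syll_eval (phi_sylls ((e, (i, j)) # r))"
    using "2.prems"
    by (auto simp: phi_t_tpow phi_tpow_minus_one GZ.m_assoc abpow_mult_assoc algebra_simps)
  finally show ?case .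
qed (simp add: phi_def)

lemma phi_nf_eval:
  "nf_valid xs \<Longrightarrow> phi (nf_eval (i, j) xs) = nf_eval (i - leading_tinv xs, j) (phi_sylls xs)"
  using phi_syll_eval[of xs] nf_valid_exponents[of xs]
  by (simp add: nf_eval_def phi_abpow abpow_mult_assoc)

lemma nf_valid_phi_sylls: "nf_valid xs \<Longrightarrow> nf_valid (phi_sylls xs)"
proof (induction xs rule: phi_sylls.induct)
  case (2 e i j r)
  have "phi_sylls r = [] \<longleftrightarrow> r = []" and "r \<noteq> [] \<Longrightarrow> fst (hd (phi_sylls r)) = fst (hd r)"
    by (cases r rule: phi_sylls.cases; simp)+
  with 2 show ?case
    by (cases r) (auto dest: nf_valid_exponents)
qed simp

section \<open>The fixed subgroup\<close>

fun alternating :: "syllables \<Rightarrow> bool" where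
  "alternating [] = True"
| "alternating [x] = False"
| "alternating (x # y # r) = (fst x = 1 \<and> fst y = -1 \<and> alternating r)"

lemma alternating_if_phi_sylls_fixed:
  "(\<forall>x\<in>set xs. fst x = 1 \<or> fst x = -1) \<Longrightarrow> leading_tinv xs = 0 \<Longrightarrow> phi_sylls xs = xs \<Longrightarrow>
     alternating xs"
proof (induction xs rule: alternating.induct)
  case (2 x)
  then show ?case by (cases x rule: prod_cases3) (auto split: if_splits)
next
  case (3 x y r)
  obtain e i j where x: "x = (e, (i, j))" by (cases x rule: prod_cases3)
  obtain e' i' j' where y: "y = (e', (i', j'))" by (cases y rule: prod_cases3)
  have "e = 1" using "3.prems"(1,2) x by (auto split: if_splits)
  moreover have "e' = -1" using "3.prems"(3) x y \<open>e = 1\<close> by (auto split: if_splits)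
  moreover have "leading_tinv r = 0" "phi_sylls r = r"
    using "3.prems"(3) x y \<open>e' = -1\<close> by (auto split: if_splits)
  ultimately show ?case using "3.IH" "3.prems"(1) x y by simp
qed simp

abbreviation A_ab :: "word set" where
  "A_ab \<equiv> generate GZ {gen_a, gen_b}"

abbreviation conj_t :: "word \<Rightarrow> word" where
  "conj_t x \<equiv> gen_t \<otimes>\<^bsub>GZ\<^esub> x \<otimes>\<^bsub>GZ\<^esub> inv\<^bsub>GZ\<^esub> gen_t"

lemma conj_t_eq: "conj_t x = tpow 1 \<otimes>\<^bsub>GZ\<^esub> x \<otimes>\<^bsub>GZ\<^esub> tpow (-1)"
  by (simp add: gen_t_eq tpow_inv)

lemma A_ab_eq_range_abpow: "A_ab = range abpow"
proof
  interpret abpow: group_hom Z2 GZ abpow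
    by (intro group_hom.intro group_hom_axioms.intro group_Z2 group_GZ abpow_hom)
  show "A_ab \<subseteq> range abpow"
    using abpow.img_is_subgroup
    by (intro GZ.generate_subgroup_incl) (auto simp: gen_a_eq gen_b_eq)
  interpret A_ab: subgroup A_ab GZ
    by (rule GZ.generate_is_subgroup) (simp add: gen_a_eq gen_b_eq)
  show "range abpow \<subseteq> A_ab"
  proof
    fix w assume "w \<in> range abpow"
    then obtain i j where w: "w = abpow (i, j)" by auto
    have "(\<lambda>n. (n, 0)) \<in> hom integer_group Z2" "(\<lambda>n. (0, n)) \<in> hom integer_group Z2"
      by (auto intro: homI)
    then have "(\<lambda>n. abpow (n, 0)) \<in> hom integer_group GZ" "(\<lambda>n. abpow (0, n)) \<in> hom integer_group GZ"
      using hom_compose[OF _ abpow_hom] by (simp_all add: comp_def)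
    then have "abpow (i, 0) = gen_a [^]\<^bsub>GZ\<^esub> i" "abpow (0, j) = gen_b [^]\<^bsub>GZ\<^esub> j"
      using hom_int_pow[of _ integer_group GZ 1] by (simp_all add: gen_a_eq gen_b_eq)
    then have "w = gen_a [^]\<^bsub>GZ\<^esub> i \<otimes>\<^bsub>GZ\<^esub> gen_b [^]\<^bsub>GZ\<^esub> j"
      using abpow_mult[of i 0 0 j] w by simp
    moreover have "gen_a \<in> A_ab" "gen_b \<in> A_ab" by (auto intro: generate.incl)
    ultimately show "w \<in> A_ab" by (simp add: A_ab.m_closed GZ.subgroup_int_pow_closed[OF A_ab.subgroup_axioms])
  qed
qed

lemma abpow_in_generate: "abpow p \<in> generate GZ (A_ab \<union> conj_t ` A_ab)"
  and conj_t_abpow_in_generate: "conj_t (abpow p) \<in> generate GZ (A_ab \<union> conj_t ` A_ab)"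
  by (auto intro: generate.incl simp: A_ab_eq_range_abpow)

lemma syll_eval_alternating:
  "alternating xs \<Longrightarrow> syll_eval xs \<in> generate GZ (A_ab \<union> conj_t ` A_ab)"
proof (induction xs rule: alternating.induct)
  case (3 x y r)
  obtain e h where x: "x = (e, h)" by (cases x)
  obtain e' h' where y: "y = (e', h')" by (cases y)
  with x "3.prems" have "syll_eval (x # y # r) = conj_t (abpow h) \<otimes>\<^bsub>GZ\<^esub> (abpow h' \<otimes>\<^bsub>GZ\<^esub> syll_eval r)"
    by (simp add: conj_t_eq GZ.m_assoc)
  with "3.IH" "3.prems" x y show ?case
    by (auto intro!: generate.eng abpow_in_generate conj_t_abpow_in_generate)
qed (simp_all add: generate.one[of GZ, simplified])

lemma Fix_phi_eq: "Fix GZ phi = generate GZ (A_ab \<union> conj_t ` A_ab)"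
proof
  show "generate GZ (A_ab \<union> conj_t ` A_ab) \<subseteq> Fix GZ phi"
  proof (rule GZ.generate_subgroup_incl[OF _ GZ.subgroup_Fix[OF phi_hom]])
    have "phi (conj_t (abpow (i, j))) = conj_t (abpow (i, j))" for i j
      by (simp add: conj_t_eq phi_t_tpow phi_tpow_minus_one phi_abpow GZ.m_assoc abpow_mult_assoc)
    then show "A_ab \<union> conj_t ` A_ab \<subseteq> Fix GZ phi"
      unfolding A_ab_eq_range_abpow Fix_def using phi_abpow by (auto simp: gen_t_eq)
  qed
  show "Fix GZ phi \<subseteq> generate GZ (A_ab \<union> conj_t ` A_ab)"
  proof
    fix w assume "w \<in> Fix GZ phi"
    then have w: "w \<in> carrier GZ" and fixed: "phi w = w" by (auto simp: Fix_def)
    obtain i j xs where nf_w: "nf w = ((i, j), xs)" by (metis prod.exhaust)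
    have valid: "nf_valid xs" using nf_valid_nf[of w] w nf_w by (simp add: GZ_carrier)
    have w_eq: "w = nf_eval (i, j) xs" using nf_eval_nf[OF w] nf_w by simp
    have "nf (phi w) = ((i - leading_tinv xs, j), phi_sylls xs)"
      using w_eq phi_nf_eval[OF valid] nf_nf_eval[OF nf_valid_phi_sylls[OF valid]] by simp
    with fixed nf_w have "leading_tinv xs = 0" "phi_sylls xs = xs" by simp_all
    then have "alternating xs"
      using alternating_if_phi_sylls_fixed nf_valid_exponents[OF valid] by blast
    then show "w \<in> generate GZ (A_ab \<union> conj_t ` A_ab)"
      unfolding w_eq nf_eval_def
      by (intro generate.eng abpow_in_generate syll_eval_alternating)
  qed
qed

interpretation ZZ_free: free_product Z2 Z2
  by (intro free_product.intro group_Z2)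

definition tconj_abpow :: "int \<times> int \<Rightarrow> word" where
  "tconj_abpow p = conj_t (abpow p)"

lemma tconj_abpow_hom: "tconj_abpow \<in> hom Z2 GZ"
  using hom_compose[OF abpow_hom GZ.conjugation_hom[of gen_t]]
  by (simp add: comp_def tconj_abpow_def[abs_def] gen_t_eq)

interpretation kappa: free_product_lift Z2 Z2 GZ abpow tconj_abpow
  by (intro free_product_lift.intro free_product_lift_axioms.intro ZZ_free.free_product_axioms
      group_GZ abpow_hom tconj_abpow_hom)

text \<open>\<open>\<kappa>\<close> turns a reduced word of \<open>\<int>\<^sup>2 * \<int>\<^sup>2\<close> syllable by syllable into a normal form of
  \<open>GZ\<close>, which gives injectivity.\<close>

abbreviation kappa :: "((int \<times> int) + (int \<times> int)) list \<Rightarrow> word" where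
  "kappa \<equiv> fp_lift GZ abpow tconj_abpow"

fun kappa_nf :: "((int \<times> int) + (int \<times> int)) list \<Rightarrow> (int \<times> int) \<times> syllables" where
  "kappa_nf [] = ((0, 0), [])"
| "kappa_nf (Inl h # u) = (h, snd (kappa_nf u))"
| "kappa_nf (Inr h # u) = ((0, 0), (1, h) # (-1, fst (kappa_nf u)) # snd (kappa_nf u))"

lemma ZZ_reduced_Cons:
  "fp_reduced Z2 Z2 (l # w) \<longleftrightarrow>
     case_sum (\<lambda>p. p \<noteq> (0, 0)) (\<lambda>p. p \<noteq> (0, 0)) l \<and> fp_reduced Z2 Z2 w \<and>
     (w = [] \<or> isl (hd w) \<noteq> isl l)"
  by (cases l) (simp_all add: ZZ_free.fp_reduced_Cons)

lemma kappa_eq_nf_eval: "fp_reduced Z2 Z2 u \<Longrightarrow> kappa u = nf_eval (fst (kappa_nf u)) (snd (kappa_nf u))"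
proof (induction u rule: kappa_nf.induct)
  case (2 h u)
  have u: "fp_reduced Z2 Z2 u" and "u = [] \<or> \<not> isl (hd u)"
    using "2.prems" by (auto simp: ZZ_reduced_Cons)
  then have "fst (kappa_nf u) = (0, 0)" by (cases u rule: kappa_nf.cases) auto
  with "2.IH"[OF u] show ?case by (simp add: nf_eval_def)
next
  case (3 h u)
  then show ?case by (simp add: nf_eval_def tconj_abpow_def conj_t_eq GZ.m_assoc ZZ_reduced_Cons)
qed (simp add: nf_eval_def)

lemma nf_valid_kappa_nf: "fp_reduced Z2 Z2 u \<Longrightarrow> nf_valid (snd (kappa_nf u))"
proof (induction u rule: kappa_nf.induct)
  case (3 h u)
  have u: "fp_reduced Z2 Z2 u" and h: "h \<noteq> (0, 0)" and hd_u: "u = [] \<or> isl (hd u)"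
    using "3.prems" by (auto simp: ZZ_reduced_Cons)
  have "u \<noteq> [] \<Longrightarrow> fst (kappa_nf u) \<noteq> (0, 0)"
    using hd_u u by (cases u rule: kappa_nf.cases) (auto simp: ZZ_reduced_Cons)
  with "3.IH"[OF u] h show ?case by (cases "u = []") auto
qed (simp_all add: ZZ_reduced_Cons)

lemma kappa_eq_Nil: "fp_reduced Z2 Z2 u \<Longrightarrow> kappa u = [] \<Longrightarrow> u = []"
proof -
  assume u: "fp_reduced Z2 Z2 u" and "kappa u = []"
  then have "nf (nf_eval (fst (kappa_nf u)) (snd (kappa_nf u))) = ((0, 0), [])"
    by (simp add: kappa_eq_nf_eval)
  then have "kappa_nf u = ((0, 0), [])"
    by (simp add: nf_nf_eval[OF nf_valid_kappa_nf[OF u]])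
  with u show "u = []" by (cases u rule: kappa_nf.cases) (auto simp: ZZ_reduced_Cons)
qed

lemma kappa_image: "kappa ` carrier (free_prod Z2 Z2) = Fix GZ phi"
proof -
  interpret kappa: group_hom "free_prod Z2 Z2" GZ kappa
    by (intro group_hom.intro group_hom_axioms.intro ZZ_free.group_free_prod group_GZ kappa.fp_lift_hom)
  have gens: "kappa (fp_inl Z2 p) = abpow p" "kappa (fp_inr Z2 p) = conj_t (abpow p)" for p
    by (simp_all add: kappa.fp_lift_inl kappa.fp_lift_inr tconj_abpow_def)
  have "generate GZ (A_ab \<union> conj_t ` A_ab) = generate GZ (kappa ` (range (fp_inl Z2) \<union> range (fp_inr Z2)))"
    by (simp add: A_ab_eq_range_abpow image_Un image_image gens)
  also have "\<dots> = kappa ` generate (free_prod Z2 Z2) (range (fp_inl Z2) \<union> range (fp_inr Z2))"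
    by (rule kappa.generate_img) (use ZZ_free.fp_inl_closed ZZ_free.fp_inr_closed in auto)
  also have "\<dots> = kappa ` carrier (free_prod Z2 Z2)"
    using ZZ_free.generate_free_prod by simp
  finally show ?thesis by (simp add: Fix_phi_eq)
qed

lemma kappa_iso: "kappa \<in> Group.iso (free_prod Z2 Z2) (GZ\<lparr>carrier := Fix GZ phi\<rparr>)"
proof -
  interpret kappa: group_hom "free_prod Z2 Z2" GZ kappa
    by (intro group_hom.intro group_hom_axioms.intro ZZ_free.group_free_prod group_GZ kappa.fp_lift_hom)
  have "kernel (free_prod Z2 Z2) GZ kappa = {\<one>\<^bsub>free_prod Z2 Z2\<^esub>}"
    using kappa_eq_Nil kappa.hom_one by (auto simp: kernel_def)
  then have "inj_on kappa (carrier (free_prod Z2 Z2))" by (simp only: kappa.inj_iff_trivial_ker)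
  with kappa_image show ?thesis
    using kappa.hom_mult by (auto simp: Group.iso_def hom_def bij_betw_def)
qed

lemma Fix_phi_iso: "GZ\<lparr>carrier := Fix GZ phi\<rparr> \<cong> free_prod Z2 Z2"
  using group.iso_sym[OF ZZ_free.group_free_prod] kappa_iso by (auto simp: is_iso_def)

section \<open>Ranks\<close>

text \<open>\<open>(\<int>/2)\<^sup>\<nat>\<close> with pointwise addition, the target of the mod-\<open>2\<close> abelianisations.\<close>

definition F2_vec :: "(nat \<Rightarrow> bool) monoid" where
  "F2_vec = \<lparr>carrier = UNIV, monoid.mult = (\<lambda>u v i. u i \<noteq> v i), one = (\<lambda>i. False)\<rparr>"

lemma F2_vec_simps [simp]:
  "carrier F2_vec = UNIV" "u \<otimes>\<^bsub>F2_vec\<^esub> v = (\<lambda>i. u i \<noteq> v i)" "\<one>\<^bsub>F2_vec\<^esub> = (\<lambda>i. False)"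
  by (simp_all add: F2_vec_def)

lemma group_F2_vec: "group F2_vec"
  by (rule groupI) (auto simp: fun_eq_iff)

lemma F2_vec_inv [simp]: "inv\<^bsub>F2_vec\<^esub> v = v"
  by (rule group.inv_equality[OF group_F2_vec]) (auto simp: fun_eq_iff)

definition vec_sum :: "(nat \<Rightarrow> bool) set \<Rightarrow> nat \<Rightarrow> bool" where
  "vec_sum A = (\<lambda>i. odd (card {v\<in>A. v i}))"

lemma odd_card_sym_diff:
  assumes "finite A" "finite B"
  shows "odd (card (sym_diff A B)) \<longleftrightarrow> odd (card A) \<noteq> odd (card B)"
proof -
  have "sym_diff A B = (A \<union> B) - (A \<inter> B)" by auto
  moreover have "card ((A \<union> B) - (A \<inter> B)) = card (A \<union> B) - card (A \<inter> B)"
    by (rule card_Diff_subset) (use assms in auto)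
  moreover have "card (A \<inter> B) \<le> card (A \<union> B)"
    by (rule card_mono) (use assms in auto)
  ultimately show ?thesis using card_Un_Int[OF assms] by presburger
qed

lemma vec_sum_mult:
  assumes "finite A" "finite B"
  shows "vec_sum A \<otimes>\<^bsub>F2_vec\<^esub> vec_sum B = vec_sum (sym_diff A B)"
proof -
  have "odd (card {v \<in> sym_diff A B. v i}) \<longleftrightarrow> odd (card {v\<in>A. v i}) \<noteq> odd (card {v\<in>B. v i})" for i
  proof -
    have "{v \<in> sym_diff A B. v i} = sym_diff {v\<in>A. v i} {v\<in>B. v i}" by auto
    then show ?thesis using odd_card_sym_diff[of "{v\<in>A. v i}" "{v\<in>B. v i}"] assms by simp
  qed
  then show ?thesis by (simp add: vec_sum_def fun_eq_iff)
qed

lemma vec_sum_singleton: "vec_sum {v} = v"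
proof -
  have "{u \<in> {v}. u i} = (if v i then {v} else {})" for i by auto
  then show ?thesis by (simp add: vec_sum_def fun_eq_iff)
qed

lemma generate_F2_vec_subset:
  assumes "finite Y"
  shows "generate F2_vec Y \<subseteq> vec_sum ` Pow Y"
proof
  fix v assume "v \<in> generate F2_vec Y"
  then show "v \<in> vec_sum ` Pow Y"
  proof (induction v rule: generate.induct)
    case one
    have "vec_sum {} = \<one>\<^bsub>F2_vec\<^esub>" by (simp add: vec_sum_def)
    then show ?case by (metis Pow_bottom image_eqI)
  next
    case (incl v)
    then have "{v} \<in> Pow Y" by simp
    then show ?case by (metis vec_sum_singleton image_eqI)
  next
    case (inv v)
    then have "{v} \<in> Pow Y" by simp
    then show ?case by (metis vec_sum_singleton image_eqI F2_vec_inv)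
  next
    case (eng u v)
    then obtain A B where "A \<subseteq> Y" "B \<subseteq> Y" "u = vec_sum A" "v = vec_sum B" by auto
    with assms vec_sum_mult[of A B] show ?case by (auto intro: finite_subset)
  qed
qed

lemma card_generators_ge:
  assumes "group G" "h \<in> hom G F2_vec"
    and cube: "\<And>A. A \<subseteq> {..<k} \<Longrightarrow> (\<lambda>i. i \<in> A) \<in> h ` carrier G"
    and S: "S \<subseteq> carrier G" "finite S" "generate G S = carrier G"
  shows "k \<le> card S"
proof -
  interpret h: group_hom G F2_vec h
    by (intro group_hom.intro group_hom_axioms.intro assms(1,2) group_F2_vec)
  have "h ` carrier G = generate F2_vec (h ` S)" using h.generate_img[OF S(1)] S(3) by simp
  also have "\<dots> \<subseteq> vec_sum ` Pow (h ` S)" using generate_F2_vec_subset S(2) by simp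
  finally have cube_subset: "(\<lambda>A i. i \<in> A) ` Pow {..<k} \<subseteq> vec_sum ` Pow (h ` S)"
    using cube by auto
  have "inj_on (\<lambda>A i. i \<in> A) (Pow {..<k})" by (auto simp: inj_on_def fun_eq_iff)
  then have "2 ^ k = card ((\<lambda>A i. i \<in> A) ` Pow {..<k})" by (simp add: card_image card_Pow)
  also have "\<dots> \<le> card (vec_sum ` Pow (h ` S))"
    using cube_subset S(2) by (intro card_mono) auto
  also have "\<dots> \<le> card (Pow (h ` S))" using S(2) by (intro card_image_le) auto
  also have "\<dots> \<le> 2 ^ card S" using S(2) by (simp add: card_Pow card_image_le)
  finally show ?thesis by simp
qed

lemma group_rank_eqI:
  assumes "S \<subseteq> carrier G" "finite S" "card S = k" "generate G S = carrier G"
    and "\<And>S'. S' \<subseteq> carrier G \<Longrightarrow> finite S' \<Longrightarrow> generate G S' = carrier G \<Longrightarrow> k \<le> card S'"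
  shows "group_rank G = k"
  unfolding group_rank_def using assms by (intro Least_equality) blast+

definition parity_at :: "nat \<Rightarrow> int \<Rightarrow> nat \<Rightarrow> bool" where
  "parity_at k n = (\<lambda>i. i = k \<and> odd n)"

definition parity_pair :: "nat \<Rightarrow> int \<times> int \<Rightarrow> nat \<Rightarrow> bool" where
  "parity_pair k p = (\<lambda>i. (i = k \<and> odd (fst p)) \<or> (i = Suc k \<and> odd (snd p)))"

lemma parity_at_hom: "parity_at k \<in> hom integer_group F2_vec"
  and parity_pair_hom: "parity_pair k \<in> hom Z2 F2_vec"
  by (auto intro!: homI simp: parity_at_def parity_pair_def fun_eq_iff)

interpretation GZ_parity: free_product_lift integer_group Z2 F2_vec "parity_at 0" "parity_pair 1"
  by (intro free_product_lift.intro free_product_lift_axioms.intro GZ_free.free_product_axioms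
      group_F2_vec parity_at_hom parity_pair_hom)

interpretation ZZ_parity: free_product_lift Z2 Z2 F2_vec "parity_pair 0" "parity_pair 2"
  by (intro free_product_lift.intro free_product_lift_axioms.intro ZZ_free.free_product_axioms
      group_F2_vec parity_pair_hom)

lemma generate_tab: "generate GZ {gen_t, gen_a, gen_b} = carrier GZ"
proof
  show "generate GZ {gen_t, gen_a, gen_b} \<subseteq> carrier GZ"
    by (rule GZ.generate_incl) (simp add: gen_t_eq gen_a_eq gen_b_eq)
  interpret tab: subgroup "generate GZ {gen_t, gen_a, gen_b}" GZ
    by (rule GZ.generate_is_subgroup) (simp add: gen_t_eq gen_a_eq gen_b_eq)
  have "tpow n \<in> generate GZ {gen_t, gen_a, gen_b}" for n
    using GZ.subgroup_int_pow_closed[OF tab.subgroup_axioms generate.incl[of gen_t]]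
    by (simp add: gen_t_eq tpow_eq_pow[symmetric])
  moreover have "abpow p \<in> generate GZ {gen_t, gen_a, gen_b}" for p
    using GZ.mono_generate[of "{gen_a, gen_b}" "{gen_t, gen_a, gen_b}"] A_ab_eq_range_abpow by auto
  ultimately have "generate GZ (range tpow \<union> range abpow) \<subseteq> generate GZ {gen_t, gen_a, gen_b}"
    by (intro GZ.generate_subgroup_incl tab.subgroup_axioms) auto
  then show "carrier GZ \<subseteq> generate GZ {gen_t, gen_a, gen_b}"
    using GZ_free.generate_free_prod by (simp add: GZ_def)
qed

lemma group_rank_GZ: "group_rank GZ = 3"
proof (rule group_rank_eqI)
  show "{gen_t, gen_a, gen_b} \<subseteq> carrier GZ" by (simp add: gen_t_eq gen_a_eq gen_b_eq)
  show "card {gen_t, gen_a, gen_b} = 3" by (simp add: gen_t_def gen_a_def gen_b_def)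
next
  fix S assume S: "S \<subseteq> carrier GZ" "finite S" "generate GZ S = carrier GZ"
  let ?\<pi> = "fp_lift F2_vec (parity_at 0) (parity_pair 1)"
  have \<pi>: "?\<pi> \<in> hom GZ F2_vec" using GZ_parity.fp_lift_hom by (simp add: GZ_def)
  have \<pi>_gens: "?\<pi> (tpow n \<otimes>\<^bsub>GZ\<^esub> abpow p) = parity_at 0 n \<otimes>\<^bsub>F2_vec\<^esub> parity_pair 1 p" for n p
    using hom_mult[OF \<pi>, of "tpow n" "abpow p"] GZ_parity.fp_lift_inl[of n] GZ_parity.fp_lift_inr[of p]
    by (simp del: F2_vec_simps(2))
  have "(\<lambda>i. i \<in> A) \<in> ?\<pi> ` carrier GZ" if "A \<subseteq> {..<3}" for A
  proof
    let ?w = "tpow (of_bool (0 \<in> A)) \<otimes>\<^bsub>GZ\<^esub> abpow (of_bool (1 \<in> A), of_bool (2 \<in> A))"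
    show "?w \<in> carrier GZ" by simp
    have "i \<in> A \<Longrightarrow> i = 0 \<or> i = 1 \<or> i = 2" for i using that by auto
    then show "(\<lambda>i. i \<in> A) = ?\<pi> ?w"
      unfolding \<pi>_gens by (auto simp: parity_at_def parity_pair_def fun_eq_iff numeral_2_eq_2)
  qed
  then show "3 \<le> card S" by (intro card_generators_ge[OF group_GZ \<pi> _ S])
qed (simp_all add: generate_tab)

interpretation ZZ: group "free_prod Z2 Z2"
  by (rule ZZ_free.group_free_prod)

lemma conj_t_hom: "conj_t \<in> hom GZ GZ"
  using GZ.conjugation_hom[of gen_t] by (simp add: gen_t_eq)

lemma conj_t_abpow: "p \<noteq> (0, 0) \<Longrightarrow> conj_t (abpow p) = [Inl 1, Inr p, Inl (-1)]"
proof -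
  assume p: "p \<noteq> (0, 0)"
  have "[Inr p, Inl (-1)] \<in> carrier GZ" using p by (simp add: GZ_carrier GZ_reduced_Cons)
  moreover have "abpow p \<otimes>\<^bsub>GZ\<^esub> tpow (-1) = [Inr p, Inl (-1)]"
    using abpow_mult_eq_fp_cons[OF tpow_closed, of p "-1"] p by (simp add: fp_inl_def)
  ultimately show ?thesis
    using tpow_mult_eq_fp_cons[of "[Inr p, Inl (-1)]" 1] by (simp add: conj_t_eq GZ.m_assoc)
qed

abbreviation Fix_gens :: "word set" where
  "Fix_gens \<equiv> {gen_a, gen_b, conj_t gen_a, conj_t gen_b}"

lemma Fix_gens_subset: "Fix_gens \<subseteq> Fix GZ phi"
  unfolding Fix_phi_eq
  by (auto intro!: generate.incl simp: A_ab_eq_range_abpow gen_a_eq gen_b_eq)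

lemma generate_Fix_gens: "generate GZ Fix_gens = Fix GZ phi"
proof
  show "generate GZ Fix_gens \<subseteq> Fix GZ phi"
    by (rule GZ.generate_subgroup_incl[OF Fix_gens_subset GZ.subgroup_Fix[OF phi_hom]])
  interpret conj_t: group_hom GZ GZ conj_t
    by (intro group_hom.intro group_hom_axioms.intro group_GZ conj_t_hom)
  have ab: "{gen_a, gen_b} \<subseteq> carrier GZ" by (simp add: gen_a_eq gen_b_eq)
  have "A_ab \<subseteq> generate GZ Fix_gens" by (rule GZ.mono_generate) auto
  moreover have "conj_t ` A_ab \<subseteq> generate GZ Fix_gens"
    using conj_t.generate_img[OF ab] GZ.mono_generate[of "conj_t ` {gen_a, gen_b}" Fix_gens] by auto
  moreover have "subgroup (generate GZ Fix_gens) GZ"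
    using Fix_gens_subset by (intro GZ.generate_is_subgroup) (auto simp: Fix_def)
  ultimately show "Fix GZ phi \<subseteq> generate GZ Fix_gens"
    unfolding Fix_phi_eq by (intro GZ.generate_subgroup_incl) auto
qed

lemma group_rank_Fix_phi: "group_rank (GZ\<lparr>carrier := Fix GZ phi\<rparr>) = 4"
proof (rule group_rank_eqI)
  show "Fix_gens \<subseteq> carrier (GZ\<lparr>carrier := Fix GZ phi\<rparr>)"
    using Fix_gens_subset by simp
  show "card Fix_gens = 4"
    by (simp add: gen_a_eq gen_b_eq conj_t_abpow) (simp add: fp_inr_def)
  show "generate (GZ\<lparr>carrier := Fix GZ phi\<rparr>) Fix_gens = carrier (GZ\<lparr>carrier := Fix GZ phi\<rparr>)"
    using GZ.generate_consistent[OF _ GZ.subgroup_Fix[OF phi_hom]] generate_Fix_gens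
      \<open>Fix_gens \<subseteq> carrier (GZ\<lparr>carrier := Fix GZ phi\<rparr>)\<close> by simp
next
  fix S assume S: "S \<subseteq> carrier (GZ\<lparr>carrier := Fix GZ phi\<rparr>)" "finite S"
    "generate (GZ\<lparr>carrier := Fix GZ phi\<rparr>) S = carrier (GZ\<lparr>carrier := Fix GZ phi\<rparr>)"
  obtain \<psi> where \<psi>: "\<psi> \<in> Group.iso (GZ\<lparr>carrier := Fix GZ phi\<rparr>) (free_prod Z2 Z2)"
    using Fix_phi_iso by (auto simp: is_iso_def)
  let ?\<pi> = "fp_lift F2_vec (parity_pair 0) (parity_pair 2)"
  have \<pi>: "?\<pi> \<in> hom (free_prod Z2 Z2) F2_vec" by (rule ZZ_parity.fp_lift_hom)
  have \<pi>_gens: "?\<pi> (fp_inl Z2 p \<otimes>\<^bsub>free_prod Z2 Z2\<^esub> fp_inr Z2 q)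
      = parity_pair 0 p \<otimes>\<^bsub>F2_vec\<^esub> parity_pair 2 q" for p q
    using hom_mult[OF \<pi> ZZ_free.fp_inl_closed ZZ_free.fp_inr_closed, of p q]
      ZZ_parity.fp_lift_inl[of p] ZZ_parity.fp_lift_inr[of q]
    by (simp del: F2_vec_simps(2))
  have "\<psi> ` carrier (GZ\<lparr>carrier := Fix GZ phi\<rparr>) = carrier (free_prod Z2 Z2)"
    using \<psi> unfolding Group.iso_def by (blast dest: bij_betw_imp_surj_on)
  then have image: "(?\<pi> \<circ> \<psi>) ` carrier (GZ\<lparr>carrier := Fix GZ phi\<rparr>) = ?\<pi> ` carrier (free_prod Z2 Z2)"
    by (simp only: image_comp[symmetric])
  have "(\<lambda>i. i \<in> A) \<in> (?\<pi> \<circ> \<psi>) ` carrier (GZ\<lparr>carrier := Fix GZ phi\<rparr>)" if "A \<subseteq> {..<4}" for A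
    unfolding image
  proof
    let ?w = "fp_inl Z2 (of_bool (0 \<in> A), of_bool (1 \<in> A)) \<otimes>\<^bsub>free_prod Z2 Z2\<^esub>
              fp_inr Z2 (of_bool (2 \<in> A), of_bool (3 \<in> A))"
    show "?w \<in> carrier (free_prod Z2 Z2)"
      by (intro ZZ.m_closed ZZ_free.fp_inl_closed ZZ_free.fp_inr_closed) simp_all
    have "i \<in> A \<Longrightarrow> i = 0 \<or> i = 1 \<or> i = 2 \<or> i = 3" for i using that by auto
    then show "(\<lambda>i. i \<in> A) = ?\<pi> ?w"
      unfolding \<pi>_gens by (auto simp: parity_pair_def fun_eq_iff numeral_2_eq_2 numeral_3_eq_3)
  qed
  moreover have "?\<pi> \<circ> \<psi> \<in> hom (GZ\<lparr>carrier := Fix GZ phi\<rparr>) F2_vec"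
    using \<psi> \<pi> by (auto intro: hom_compose simp: Group.iso_def)
  ultimately show "4 \<le> card S"
    using card_generators_ge[OF GZ.subgroup_imp_group[OF GZ.subgroup_Fix[OF phi_hom]] _ _ S]
    by blast
qed simp

theorem mainTheorem13:
  shows "group GZ
    \<and> phi \<in> Group.iso GZ GZ
    \<and> phi gen_t = gen_t \<otimes>\<^bsub>GZ\<^esub> gen_a \<and> phi gen_a = gen_a \<and> phi gen_b = gen_b
    \<and> Fix GZ phi = generate GZ (generate GZ {gen_a, gen_b}
          \<union> (\<lambda>x. gen_t \<otimes>\<^bsub>GZ\<^esub> x \<otimes>\<^bsub>GZ\<^esub> inv\<^bsub>GZ\<^esub> gen_t) ` generate GZ {gen_a, gen_b})
    \<and> GZ\<lparr>carrier := Fix GZ phi\<rparr> \<cong> free_prod Z2 Z2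
    \<and> group_rank (GZ\<lparr>carrier := Fix GZ phi\<rparr>) = 4
    \<and> group_rank GZ = 3
    \<and> group_rank (GZ\<lparr>carrier := Fix GZ phi\<rparr>) = 2 * (group_rank GZ - 1)"
  using group_GZ phi_iso phi_t phi_abpow[of "(1, 0)"] phi_abpow[of "(0, 1)"] Fix_phi_eq Fix_phi_iso
    group_rank_Fix_phi group_rank_GZ
  by (simp add: gen_a_eq gen_b_eq)

end
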